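(* Let $\alpha\ge1$, let $m_0:[0,\infty)\to[0,\infty)$ be bounded, Lipschitz and non-decreasing with $m_0(0)=0$, let $h_\rho,h_t>0$ satisfy (CFL), let $M_j^n$ be given by the scheme (M), and let $U_j^n=\frac{M_j^n-M_{j-1}^n}{h_\rho}$ for $j\ge1$. Then $U_j^n\ge0$ for all $n,j$ and $$\sup_{j}U_j^{n+1}\le\sup_jU_j^n\qquad\text{for all }n\ge0.$$
   Context: (CFL): $\frac{h_t}{h_\rho}\le\frac{1}{2\alpha\|(m_0)_\rho\|_\infty^{\alpha-1}\|m_0\|_\infty}$. Scheme (M): with $t_n=nh_t$, $\rho_j=jh_\rho$, $H(s)=\big(\min\{s_+,\|(m_0)_\rho\|_\infty\}\big)^\alpha$, set $M_j^0=m_0(\rho_j)$ ($j\ge0$), $M_0^n=0$ ($n>0$), and $M_j^{n+1}=M_j^n\big/\big(1+h_tH\big(\frac{M_j^n-M_{j-1}^n}{h_\rho}\big)\big)$ for $j\ge1$, $n\ge0$. *)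

theory Defs
  imports "HOL-Analysis.Analysis"
begin

definition sup_norm :: "(real \<Rightarrow> real) \<Rightarrow> real" where
  "sup_norm f = (SUP x\<in>{0..}. \<bar>f x\<bar>)"

text \<open>The L-infinity norm of the (a.e.) derivative of a Lipschitz function on [0,oo),
  which equals its best Lipschitz constant on [0,oo).\<close>
definition deriv_sup_norm :: "(real \<Rightarrow> real) \<Rightarrow> real" where
  "deriv_sup_norm f = Inf {C. C-lipschitz_on {0..} f}"

definition Hfun :: "real \<Rightarrow> real \<Rightarrow> real \<Rightarrow> real" where
  "Hfun \<alpha> L s = (min (max s 0) L) powr \<alpha>"

end

theory Submission
  imports Defs
begin

text \<open>The rate H is nonnegative, nondecreasing, vanishes at 0 and is Lipschitz on [0,\<infinity>) with
  constant l = \<alpha> L^(\<alpha>-1), and the CFL condition says h_t l |m_0|_\<infinity> \<le> h_\<rho>/2.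
  By induction on n, M stays between 0 and |m_0|_\<infinity> and is nondecreasing in j.
  For the gradients: if U_j \<ge> U_(j-1), then M_j is divided by at least as much as M_(j-1), so the
  new U_j is at most the old one; otherwise the extra loss of M_(j-1) over that of M_j is at most
  h_t |m_0|_\<infinity> l (U_(j-1) - U_j) \<le> h_\<rho> (U_(j-1) - U_j)/2, so the new U_j is at most U_(j-1).
  Either way the new gradient is bounded by max U_j U_(j-1), whence the supremum cannot grow.\<close>

lemma powr_diff_le:
  fixes x y L a :: real
  assumes "a \<ge> 1" "0 \<le> x" "x \<le> y" "y \<le> L"
  shows "y powr a - x powr a \<le> a * L powr (a - 1) * (y - x)"
proof (cases "x = y")
  case True
  then show ?thesis by simp
next
  case False
  then have xy: "x < y" using assms by simp
  have cont: "continuous_on {x..y} (\<lambda>z. z powr a)"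
    using assms by (intro continuous_on_powr'[OF continuous_on_id continuous_on_const]) auto
  have diff: "(\<lambda>z. z powr a) differentiable (at z)" if "x < z" for z
  proof -
    have "z > 0" using that assms by linarith
    then show ?thesis using has_real_derivative_powr real_differentiable_def by blast
  qed
  obtain l z where z: "x < z" "z < y" "DERIV (\<lambda>z. z powr a) z :> l"
     "y powr a - x powr a = (y - x) * l"
    using MVT[OF xy cont diff] by blast
  have "z > 0" using z assms by linarith
  then have "l = a * z powr (a - 1)"
    using DERIV_unique[OF z(3) has_real_derivative_powr] by blast
  moreover have "z powr (a - 1) \<le> L powr (a - 1)"
    using assms z by (intro powr_mono2) auto
  ultimately have "(y - x) * l \<le> (y - x) * (a * L powr (a - 1))"
    using xy assms by (intro mult_left_mono) auto
  then show ?thesis using z(4) by (simp add: mult_ac)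
qed

lemma Hfun_nonneg: "Hfun a L s \<ge> 0"
  unfolding Hfun_def by simp

lemma Hfun_zero: "L \<ge> 0 \<Longrightarrow> Hfun a L 0 = 0"
  unfolding Hfun_def by simp

lemma Hfun_mono: "a \<ge> 1 \<Longrightarrow> L \<ge> 0 \<Longrightarrow> mono (Hfun a L)"
  unfolding Hfun_def by (intro monoI powr_mono2) auto

lemma Hfun_diff_le:
  assumes "a \<ge> 1" "L \<ge> 0" "0 \<le> u" "u \<le> v"
  shows "Hfun a L v - Hfun a L u \<le> a * L powr (a - 1) * (v - u)"
proof -
  have "Hfun a L v - Hfun a L u = min v L powr a - min u L powr a"
    unfolding Hfun_def using assms by (simp add: max_def)
  also have "\<dots> \<le> a * L powr (a - 1) * (min v L - min u L)"
    by (rule powr_diff_le) (use assms in auto)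
  also have "\<dots> \<le> a * L powr (a - 1) * (v - u)"
    using assms by (intro mult_left_mono) auto
  finally show ?thesis .
qed

lemma inverse_one_plus_diff_le:
  fixes t u v :: real
  assumes "0 \<le> t" "0 \<le> u" "u \<le> v"
  shows "1 / (1 + t * u) - 1 / (1 + t * v) \<le> t * (v - u)"
proof -
  have pos: "1 + t * u \<ge> 1" "1 + t * v \<ge> 1" using assms by auto
  then have prod: "1 \<le> (1 + t * u) * (1 + t * v)"
    using mult_mono[of 1 "1 + t * u" 1 "1 + t * v"] by simp
  have "1 / (1 + t * u) - 1 / (1 + t * v) = t * (v - u) / ((1 + t * u) * (1 + t * v))"
    using pos by (simp add: field_simps)
  also have "\<dots> \<le> t * (v - u) / 1"
    using assms prod by (intro divide_left_mono) auto
  finally show ?thesis by simp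
qed

lemma scheme_step_keeps_order:
  fixes H :: "real \<Rightarrow> real" and a b K t h l :: real
  assumes "0 \<le> b" "b \<le> a" "b \<le> K" "0 \<le> t" "h > 0" "t * (l * K) \<le> h / 2"
    and H_nonneg: "\<And>x. 0 \<le> H x" and H_zero: "H 0 = 0"
    and H_lip: "\<And>u v. 0 \<le> u \<Longrightarrow> u \<le> v \<Longrightarrow> H v - H u \<le> l * (v - u)"
  shows "b \<le> a / (1 + t * H ((a - b) / h))"
proof -
  let ?x = "(a - b) / h"
  have x: "0 \<le> ?x" using assms by simp
  have Hx: "H ?x \<le> l * ?x" using H_lip[OF order_refl x] H_zero by simp
  have "b * (t * H ?x) \<le> K * (t * (l * ?x))"
    using assms x Hx H_nonneg[of ?x] by (intro mult_mono mult_left_mono) auto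
  also have "\<dots> = t * (l * K) * ?x" by simp
  also have "\<dots> \<le> h / 2 * ?x" using assms x by (intro mult_right_mono) auto
  also have "\<dots> = (a - b) / 2" using assms by simp
  finally have "b * (1 + t * H ?x) \<le> a" using assms by (simp add: algebra_simps)
  moreover have "1 + t * H ?x > 0" using assms H_nonneg[of ?x] by (simp add: add_pos_nonneg)
  ultimately show ?thesis by (simp add: pos_le_divide_eq)
qed

lemma scheme_step_gradient_le_max:
  fixes H :: "real \<Rightarrow> real" and a b c K t h l :: real
  assumes "0 \<le> c" "c \<le> b" "b \<le> a" "b \<le> K" "0 \<le> t" "h > 0" "t * (l * K) \<le> h / 2"
    and H_nonneg: "\<And>x. 0 \<le> H x" and H_mono: "mono H"
    and H_lip: "\<And>u v. 0 \<le> u \<Longrightarrow> u \<le> v \<Longrightarrow> H v - H u \<le> l * (v - u)"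
  shows "a / (1 + t * H ((a - b) / h)) - b / (1 + t * H ((b - c) / h)) \<le> max (a - b) (b - c)"
proof -
  define Ha Hb where "Ha = H ((a - b) / h)" and "Hb = H ((b - c) / h)"
  have D: "1 \<le> 1 + t * Ha" "1 \<le> 1 + t * Hb"
    using assms H_nonneg unfolding Ha_def Hb_def by auto
  have shrink: "(a - b) / (1 + t * Ha) \<le> a - b"
    using assms D divide_left_mono[of 1 "1 + t * Ha" "a - b"] by simp
  define gap where "gap = b * (1 / (1 + t * Ha) - 1 / (1 + t * Hb))"
  have split: "a / (1 + t * Ha) - b / (1 + t * Hb) = (a - b) / (1 + t * Ha) + gap"
    unfolding gap_def by (simp add: diff_divide_distrib right_diff_distrib)
  consider "b - c \<le> a - b" | "a - b \<le> b - c" by linarith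
  then have "a / (1 + t * Ha) - b / (1 + t * Hb) \<le> max (a - b) (b - c)"
  proof cases
    case 1
    then have "(b - c) / h \<le> (a - b) / h" using assms by (simp add: divide_right_mono)
    then have "Hb \<le> Ha" unfolding Ha_def Hb_def by (rule monoD[OF H_mono])
    then have "1 + t * Hb \<le> 1 + t * Ha" using assms by (simp add: mult_left_mono)
    then have "b / (1 + t * Ha) \<le> b / (1 + t * Hb)"
      using assms D by (intro divide_left_mono) auto
    then show ?thesis using shrink by (simp add: diff_divide_distrib)
  next
    case 2
    define \<delta> where "\<delta> = ((b - c) - (a - b)) / h"
    have \<delta>: "0 \<le> \<delta>" using 2 assms by (simp add: \<delta>_def)
    have gradients: "0 \<le> (a - b) / h" "(a - b) / h \<le> (b - c) / h"
      using 2 assms by (simp_all add: divide_right_mono)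
    have "Ha \<le> Hb" unfolding Ha_def Hb_def using gradients(2) by (rule monoD[OF H_mono])
    have "\<delta> = (b - c) / h - (a - b) / h" unfolding \<delta>_def by (rule diff_divide_distrib)
    then have "Hb - Ha \<le> l * \<delta>" unfolding Ha_def Hb_def using H_lip[OF gradients] by simp
    have "1 / (1 + t * Ha) - 1 / (1 + t * Hb) \<le> t * (Hb - Ha)"
      using assms \<open>Ha \<le> Hb\<close> H_nonneg unfolding Ha_def by (intro inverse_one_plus_diff_le) auto
    also have "\<dots> \<le> t * (l * \<delta>)"
      using assms \<open>Hb - Ha \<le> l * \<delta>\<close> by (simp add: mult_left_mono)
    finally have "b * (1 / (1 + t * Ha) - 1 / (1 + t * Hb)) \<le> b * (t * (l * \<delta>))"
      using assms by (simp add: mult_left_mono)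
    also have "\<dots> \<le> K * (t * (l * \<delta>))"
      using assms \<open>Ha \<le> Hb\<close> \<open>Hb - Ha \<le> l * \<delta>\<close> by (intro mult_right_mono) auto
    also have "\<dots> = t * (l * K) * \<delta>" by simp
    also have "\<dots> \<le> h / 2 * \<delta>" using assms \<delta> by (intro mult_right_mono) auto
    also have "\<dots> = ((b - c) - (a - b)) / 2" using assms by (simp add: \<delta>_def)
    finally have "gap \<le> ((b - c) - (a - b)) / 2" unfolding gap_def .
    with shrink have "(a - b) / (1 + t * Ha) + gap \<le> (a - b) + ((b - c) - (a - b)) / 2"
      by (rule add_mono)
    also have "\<dots> \<le> b - c" using 2 by (simp add: field_simps)
    finally show ?thesis unfolding split by simp
  qed
  then show ?thesis unfolding Ha_def Hb_def .
qed

locale truncated_rate_scheme =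
  fixes \<alpha> L K h\<^sub>t h\<^sub>\<rho> :: real and M :: "nat \<Rightarrow> nat \<Rightarrow> real"
  assumes alpha: "\<alpha> \<ge> 1" and L_nonneg: "L \<ge> 0"
    and ht: "h\<^sub>t > 0" and hr: "h\<^sub>\<rho> > 0"
    and CFL: "h\<^sub>t * (2 * \<alpha> * L powr (\<alpha> - 1) * K) \<le> h\<^sub>\<rho>"
    and boundary: "M n 0 = 0"
    and init_nonneg: "0 \<le> M 0 j" and init_le: "M 0 j \<le> K"
    and init_mono: "M 0 j \<le> M 0 (Suc j)"
    and step: "j \<ge> 1 \<Longrightarrow>
      M (Suc n) j = M n j / (1 + h\<^sub>t * Hfun \<alpha> L ((M n j - M n (j - 1)) / h\<^sub>\<rho>))"
begin

definition U :: "nat \<Rightarrow> nat \<Rightarrow> real" where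
  "U n j = (M n j - M n (j - 1)) / h\<^sub>\<rho>"

lemma U_zero: "U n 0 = 0"
  unfolding U_def by simp

text \<open>The update formula holds for every j: at j = 0 both sides vanish (note U n 0 = 0, as
  0 - 1 = 0 in nat).\<close>

lemma M_Suc: "M (Suc n) j = M n j / (1 + h\<^sub>t * Hfun \<alpha> L (U n j))"
  using step[of j n] boundary[of n] boundary[of "Suc n"] unfolding U_def
  by (cases "j = 0") auto

lemma CFL_half: "h\<^sub>t * ((\<alpha> * L powr (\<alpha> - 1)) * K) \<le> h\<^sub>\<rho> / 2"
  using CFL by (simp add: algebra_simps)

lemma M_nonneg_Suc_le: "0 \<le> M (Suc n) j \<and> M (Suc n) j \<le> M n j" if "0 \<le> M n j"
proof -
  have "1 \<le> 1 + h\<^sub>t * Hfun \<alpha> L (U n j)" using ht Hfun_nonneg by simp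
  then show ?thesis
    unfolding M_Suc using that divide_left_mono[of 1 _ "M n j"] by auto
qed

lemma M_nonneg: "0 \<le> M n j"
  by (induction n arbitrary: j) (auto simp: init_nonneg M_nonneg_Suc_le)

lemma M_Suc_le: "M (Suc n) j \<le> M n j"
  using M_nonneg_Suc_le M_nonneg by blast

lemma M_le: "M n j \<le> K"
  by (induction n) (auto simp: init_le intro: order_trans[OF M_Suc_le])

lemma M_mono: "M n j \<le> M n (Suc j)"
proof (induction n arbitrary: j)
  case 0
  show ?case by (rule init_mono)
next
  case (Suc n)
  have "M (Suc n) j \<le> M n j" by (rule M_Suc_le)
  also have "\<dots> \<le> M n (Suc j) / (1 + h\<^sub>t * Hfun \<alpha> L ((M n (Suc j) - M n j) / h\<^sub>\<rho>))"
    using ht by (intro scheme_step_keeps_order[OF M_nonneg Suc.IH M_le _ hr CFL_half Hfun_nonneg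
          Hfun_zero[OF L_nonneg] Hfun_diff_le[OF alpha L_nonneg]]) auto
  also have "\<dots> = M (Suc n) (Suc j)" using M_Suc by (simp add: U_def)
  finally show ?case .
qed

lemma U_nonneg: "0 \<le> U n j"
  unfolding U_def using M_mono[of n "j - 1"] hr by (cases j) auto

lemma U_Suc_le_max: "U (Suc n) (Suc j) \<le> max (U n (Suc j)) (U n j)"
proof -
  have U_eq: "U n (Suc j) = (M n (Suc j) - M n j) / h\<^sub>\<rho>"
    "U n j = (M n j - M n (j - 1)) / h\<^sub>\<rho>" by (simp_all add: U_def)
  have "M n (j - 1) \<le> M n j" using M_mono[of n "j - 1"] by (cases j) auto
  then have "M (Suc n) (Suc j) - M (Suc n) j \<le> max (M n (Suc j) - M n j) (M n j - M n (j - 1))"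
    unfolding M_Suc U_eq using ht
    by (intro scheme_step_gradient_le_max[OF M_nonneg _ M_mono M_le _ hr CFL_half Hfun_nonneg
          Hfun_mono[OF alpha L_nonneg] Hfun_diff_le[OF alpha L_nonneg]]) auto
  then have "U (Suc n) (Suc j) \<le> max (M n (Suc j) - M n j) (M n j - M n (j - 1)) / h\<^sub>\<rho>"
    unfolding U_def using hr by (intro divide_right_mono) auto
  also have "\<dots> = max (U n (Suc j)) (U n j)"
    unfolding U_eq max_divide_distrib_right using hr by simp
  finally show ?thesis .
qed

lemma SUP_U_Suc_le: "(SUP j\<in>{1..}. ereal (U (Suc n) j)) \<le> (SUP j\<in>{1..}. ereal (U n j))"
proof (rule SUP_least)
  fix j :: nat
  assume "j \<in> {1..}"
  then obtain i where j: "j = Suc i" by (cases j) auto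
  have upper: "ereal (U n k) \<le> (SUP j\<in>{1..}. ereal (U n j))" for k
  proof -
    have "ereal (U n k) \<le> ereal (U n (max k 1))" using U_zero U_nonneg by (cases k) auto
    also have "\<dots> \<le> (SUP j\<in>{1..}. ereal (U n j))" by (rule SUP_upper) simp
    finally show ?thesis .
  qed
  have "ereal (U (Suc n) j) \<le> max (ereal (U n (Suc i))) (ereal (U n i))"
    using U_Suc_le_max[of n i] unfolding j by (simp add: ereal_max[symmetric] del: ereal_max)
  also have "\<dots> \<le> (SUP j\<in>{1..}. ereal (U n j))"
    using upper by simp
  finally show "ereal (U (Suc n) j) \<le> (SUP j\<in>{1..}. ereal (U n j))" .
qed

end

lemma deriv_sup_norm_nonneg: "C-lipschitz_on {0..} f \<Longrightarrow> deriv_sup_norm f \<ge> 0"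
  unfolding deriv_sup_norm_def by (intro cInf_greatest) (auto simp: lipschitz_on_def)

lemma le_sup_norm:
  assumes "bounded (f ` {0..})" "x \<ge> 0"
  shows "f x \<le> sup_norm f"
proof -
  obtain B where "\<forall>y\<in>f ` {0..}. norm y \<le> B" using assms(1) bounded_iff by blast
  then have "bdd_above ((\<lambda>x. \<bar>f x\<bar>) ` {0..})" by (intro bdd_aboveI2) auto
  then have "\<bar>f x\<bar> \<le> sup_norm f"
    unfolding sup_norm_def using assms(2) by (intro cSUP_upper) auto
  then show ?thesis by linarith
qed

theorem mainTheorem11:
  fixes \<alpha> h\<^sub>t h\<^sub>\<rho> :: real and m0 :: "real \<Rightarrow> real" and M :: "nat \<Rightarrow> nat \<Rightarrow> real"
  assumes alpha: "\<alpha> \<ge> 1"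
    and m0_nonneg: "\<forall>x\<ge>0. m0 x \<ge> 0"
    and m0_bdd: "bounded (m0 ` {0..})"
    and m0_lip: "\<exists>C. C-lipschitz_on {0..} m0"
    and m0_mono: "mono_on {0..} m0"
    and m0_zero: "m0 0 = 0"
    and ht: "h\<^sub>t > 0" and hr: "h\<^sub>\<rho> > 0"
    and CFL: "h\<^sub>t * (2 * \<alpha> * deriv_sup_norm m0 powr (\<alpha> - 1) * sup_norm m0) \<le> h\<^sub>\<rho>"
    and init: "\<forall>j. M 0 j = m0 (real j * h\<^sub>\<rho>)"
    and bdry: "\<forall>n>0. M n 0 = 0"
    and step: "\<forall>n j. j \<ge> 1 \<longrightarrow>
        M (Suc n) j = M n j / (1 + h\<^sub>t * Hfun \<alpha> (deriv_sup_norm m0) ((M n j - M n (j - 1)) / h\<^sub>\<rho>))"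
  shows "(\<forall>n j. j \<ge> 1 \<longrightarrow> (M n j - M n (j - 1)) / h\<^sub>\<rho> \<ge> 0) \<and>
         (\<forall>n. (SUP j\<in>{1..}. ereal ((M (Suc n) j - M (Suc n) (j - 1)) / h\<^sub>\<rho>))
              \<le> (SUP j\<in>{1..}. ereal ((M n j - M n (j - 1)) / h\<^sub>\<rho>)))"
proof -
  interpret truncated_rate_scheme \<alpha> "deriv_sup_norm m0" "sup_norm m0" h\<^sub>t h\<^sub>\<rho> M
  proof
    show "deriv_sup_norm m0 \<ge> 0" using m0_lip deriv_sup_norm_nonneg by blast
    show "M n 0 = 0" for n using init bdry m0_zero by (cases n) auto
    show "M 0 j \<le> M 0 (Suc j)" for j
      using init hr by (auto intro!: mono_onD[OF m0_mono] mult_right_mono)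
  qed (use alpha ht hr CFL init step m0_nonneg le_sup_norm[OF m0_bdd] in auto)
  show ?thesis using U_nonneg SUP_U_Suc_le unfolding U_def by blast
qed

end
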